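(* Let $Q$ be a symmetric Leibniz algebra and $L$ a semiprime subalgebra of $Q$ such that $Q$ is an algebra of quotients of $L$. Then $\mathscr{A}(Q)$ is a left quotient algebra of $\mathscr{A}_0$.
   Context: A symmetric Leibniz algebra is one satisfying both $[x,[y,z]]=[[x,y],z]-[[x,z],y]$ and $[x,[y,z]]=[[x,y],z]+[y,[x,z]]$. Ideals of $L$ are subspaces $I$ with $[I,L]\subseteq I$, $[L,I]\subseteq I$; $L$ is semiprime if $[I,I]\ne\{0\}$ for every nonzero ideal $I$. For $x\in Q$, $R_x(u)=[u,x]$, $L_x(u)=[x,u]$. $\mathscr{A}(Q)$ is the associative subalgebra of $\mathrm{End}(Q)$ generated by $\{R_x,L_y:x,y\in Q\}$, and $\mathscr{A}_0=\{\mu\in\mathscr{A}(Q):\mu(L)\subseteq L\}$. For $q\in Q$, with $\mathscr{A}_Q(L)$ the subalgebra of $\mathscr{A}(Q)$ generated by $R_x,L_y$ ($x,y\in L$), set ${}_L(q)=\mathbb{F}q+\{\sum\xi_i(q):\xi_i\in\mathscr{A}_Q(L)\}$ and $(L:q)=\{x\in L:[x,{}_L(q)]\subseteq L,[{}_L(q),x]\subseteq L\}$. $Q$ is an algebra of quotients of $L$ if for all $p,q\in Q$ with $p\ne0$ there is $x\in(L:q)$ with $[x,p]\ne0$ or $y\in(L:q)$ with $[p,y]\ne0$. An associative algebra $S$ is a left quotient algebra of a subalgebra $A$ if for all $p,q\in S$ with $p\neq 0$ there exists $x\in A$ with $xp\neq0$ and $xq\in A$. *)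

theory Defs
  imports Main "HOL.Vector_Spaces"
begin

text \<open>Setting: Q is the whole carrier type 'q, a vector space over the field 'f
with scalar multiplication sc; br is the bracket of Q.\<close>

definition bilinear_bracket :: "('f::field \<Rightarrow> 'q::ab_group_add \<Rightarrow> 'q) \<Rightarrow> ('q \<Rightarrow> 'q \<Rightarrow> 'q) \<Rightarrow> bool" where
  "bilinear_bracket sc br \<longleftrightarrow>
     (\<forall>y. Vector_Spaces.linear sc sc (\<lambda>x. br x y)) \<and> (\<forall>x. Vector_Spaces.linear sc sc (br x))"

definition symmetric_leibniz :: "('f::field \<Rightarrow> 'q::ab_group_add \<Rightarrow> 'q) \<Rightarrow> ('q \<Rightarrow> 'q \<Rightarrow> 'q) \<Rightarrow> bool" where
  "symmetric_leibniz sc br \<longleftrightarrow> vector_space sc \<and> bilinear_bracket sc br \<and>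
     (\<forall>x y z. br x (br y z) = br (br x y) z - br (br x z) y) \<and>
     (\<forall>x y z. br x (br y z) = br (br x y) z + br y (br x z))"

definition subalgebra :: "('f::field \<Rightarrow> 'q::ab_group_add \<Rightarrow> 'q) \<Rightarrow> ('q \<Rightarrow> 'q \<Rightarrow> 'q) \<Rightarrow> 'q set \<Rightarrow> bool" where
  "subalgebra sc br L \<longleftrightarrow> module.subspace sc L \<and> (\<forall>x\<in>L. \<forall>y\<in>L. br x y \<in> L)"

definition ideal_of :: "('f::field \<Rightarrow> 'q::ab_group_add \<Rightarrow> 'q) \<Rightarrow> ('q \<Rightarrow> 'q \<Rightarrow> 'q) \<Rightarrow> 'q set \<Rightarrow> 'q set \<Rightarrow> bool" where
  "ideal_of sc br L I \<longleftrightarrow> I \<subseteq> L \<and> module.subspace sc I \<and>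
     (\<forall>a\<in>I. \<forall>x\<in>L. br a x \<in> I \<and> br x a \<in> I)"

text \<open>[I,I] \<noteq> {0}: the span of all brackets is nonzero iff some bracket is nonzero.\<close>
definition semiprime :: "('f::field \<Rightarrow> 'q::ab_group_add \<Rightarrow> 'q) \<Rightarrow> ('q \<Rightarrow> 'q \<Rightarrow> 'q) \<Rightarrow> 'q set \<Rightarrow> bool" where
  "semiprime sc br L \<longleftrightarrow>
     (\<forall>I. ideal_of sc br L I \<and> I \<noteq> {0} \<longrightarrow> (\<exists>a\<in>I. \<exists>b\<in>I. br a b \<noteq> 0))"

text \<open>Associative (non-unital) subalgebra of End(Q) generated by R_x, L_y with x, y in S:
  the smallest set containing these operators that is closed under
  addition, scalar multiples and composition (it contains 0 as 0 * R_x).\<close>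
inductive_set gen_alg :: "('f::field \<Rightarrow> 'q::ab_group_add \<Rightarrow> 'q) \<Rightarrow> ('q \<Rightarrow> 'q \<Rightarrow> 'q) \<Rightarrow> 'q set \<Rightarrow> ('q \<Rightarrow> 'q) set"
  for sc br S where
  R: "x \<in> S \<Longrightarrow> (\<lambda>u. br u x) \<in> gen_alg sc br S"
| L: "y \<in> S \<Longrightarrow> (\<lambda>u. br y u) \<in> gen_alg sc br S"
| zero: "(\<lambda>u. 0) \<in> gen_alg sc br S"
| add: "f \<in> gen_alg sc br S \<Longrightarrow> g \<in> gen_alg sc br S \<Longrightarrow> (\<lambda>u. f u + g u) \<in> gen_alg sc br S"
| smult: "f \<in> gen_alg sc br S \<Longrightarrow> (\<lambda>u. sc c (f u)) \<in> gen_alg sc br S"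
| comp: "f \<in> gen_alg sc br S \<Longrightarrow> g \<in> gen_alg sc br S \<Longrightarrow> f \<circ> g \<in> gen_alg sc br S"

abbreviation AQ where "AQ sc br \<equiv> gen_alg sc br UNIV"

definition A0 where "A0 sc br L = {\<mu> \<in> AQ sc br. \<mu> ` L \<subseteq> L}"

definition gen_L :: "('f::field \<Rightarrow> 'q::ab_group_add \<Rightarrow> 'q) \<Rightarrow> ('q \<Rightarrow> 'q \<Rightarrow> 'q) \<Rightarrow> 'q set \<Rightarrow> 'q \<Rightarrow> 'q set" where
  "gen_L sc br L q = {sc c q + (\<Sum>\<xi>\<in>X. \<xi> q) | c X. finite X \<and> X \<subseteq> gen_alg sc br L}"

definition colon :: "('f::field \<Rightarrow> 'q::ab_group_add \<Rightarrow> 'q) \<Rightarrow> ('q \<Rightarrow> 'q \<Rightarrow> 'q) \<Rightarrow> 'q set \<Rightarrow> 'q \<Rightarrow> 'q set" where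
  "colon sc br L q = {x \<in> L. \<forall>u \<in> gen_L sc br L q. br x u \<in> L \<and> br u x \<in> L}"

definition algebra_of_quotients :: "('f::field \<Rightarrow> 'q::ab_group_add \<Rightarrow> 'q) \<Rightarrow> ('q \<Rightarrow> 'q \<Rightarrow> 'q) \<Rightarrow> 'q set \<Rightarrow> bool" where
  "algebra_of_quotients sc br L \<longleftrightarrow>
     (\<forall>p q. p \<noteq> 0 \<longrightarrow> (\<exists>x \<in> colon sc br L q. br x p \<noteq> 0 \<or> br p x \<noteq> 0))"

text \<open>S is a left quotient algebra of its subalgebra A (product = composition).\<close>
definition left_quotient_algebra :: "('q \<Rightarrow> 'q) set \<Rightarrow> ('q::zero \<Rightarrow> 'q) set \<Rightarrow> bool" where
  "left_quotient_algebra S A \<longleftrightarrow>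
     (\<forall>p\<in>S. \<forall>q\<in>S. p \<noteq> (\<lambda>u. 0) \<longrightarrow> (\<exists>x\<in>A. x \<circ> p \<noteq> (\<lambda>u. 0) \<and> x \<circ> q \<in> A))"

end

theory Submission
  imports Defs
begin

text \<open>In a symmetric Leibniz algebra every square [x,x] annihilates Q on both sides, so the
  density of L in Q forces [x,x] = 0: Q is a Lie algebra. Call an ideal K of L dense if no
  nonzero element of L is annihilated by K. Semiprimeness makes dense ideals closed under
  intersection, and the density of L in Q shows that a dense ideal annihilates no nonzero
  element of Q and that (K : y) is dense whenever K is. Induction over the generators of
  \<A>(Q) then gives, for every \<mu> \<in> \<A>(Q) and every dense K, a dense J with [J, \<mu>(L)] \<subseteq> K.
  For p \<noteq> 0 and q in \<A>(Q), choose u with p u \<noteq> 0 and a dense J with [J, q(L)] \<subseteq> L;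
  some a \<in> J has [a, p u] \<noteq> 0, and L_a \<in> \<A>_0 is the required left multiplier.\<close>

lemma gen_alg_sum:
  assumes "finite X" and "X \<subseteq> gen_alg sc br S"
  shows "(\<lambda>t. \<Sum>\<xi>\<in>X. \<xi> t) \<in> gen_alg sc br S"
  using assms
proof (induction X rule: finite_induct)
  case empty
  then show ?case using gen_alg.zero by simp
next
  case (insert \<xi> X)
  then show ?case using gen_alg.add[of \<xi> sc br S "\<lambda>t. \<Sum>\<xi>\<in>X. \<xi> t"] by simp
qed

lemma mem_gen_L_iff:
  "u \<in> gen_L sc br L y \<longleftrightarrow> (\<exists>c \<xi>. \<xi> \<in> gen_alg sc br L \<and> u = sc c y + \<xi> y)"
proof
  assume "u \<in> gen_L sc br L y"
  then obtain c X where "finite X" "X \<subseteq> gen_alg sc br L" "u = sc c y + (\<Sum>\<xi>\<in>X. \<xi> y)"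
    unfolding gen_L_def by auto
  then show "\<exists>c \<xi>. \<xi> \<in> gen_alg sc br L \<and> u = sc c y + \<xi> y"
    using gen_alg_sum by fastforce
next
  assume "\<exists>c \<xi>. \<xi> \<in> gen_alg sc br L \<and> u = sc c y + \<xi> y"
  then obtain c \<xi> where "\<xi> \<in> gen_alg sc br L" "u = sc c y + \<xi> y" by auto
  then show "u \<in> gen_L sc br L y"
    unfolding gen_L_def by (intro CollectI exI[of _ c] exI[of _ "{\<xi>}"]) auto
qed

lemma symmetric_leibniz_square_annihilates:
  assumes "symmetric_leibniz sc br"
  shows "br z (br x x) = 0" and "br (br x x) z = 0"
proof -
  have "br z (br x x) = br (br z x) x - br (br z x) x"
    and "br x (br x z) = br (br x x) z + br x (br x z)"
    using assms unfolding symmetric_leibniz_def by blast+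
  then show "br z (br x x) = 0" and "br (br x x) z = 0" by simp_all
qed

locale lie_algebra = vector_space sc for sc :: "'f::field \<Rightarrow> 'q::ab_group_add \<Rightarrow> 'q" +
  fixes br
  assumes bilinear: "bilinear_bracket sc br"
    and alternating: "br x x = 0"
    and leibniz: "br x (br y z) = br (br x y) z + br y (br x z)"
begin

lemma bracket_scale_left: "br (sc c x) y = sc c (br x y)"
  and bracket_scale_right: "br x (sc c y) = sc c (br x y)"
  and additive_bracket_left: "additive (\<lambda>x. br x y)"
  and additive_bracket_right: "additive (br x)"
  using bilinear unfolding bilinear_bracket_def linear_iff additive_def by blast+

lemmas bracket_add_left = additive.add[OF additive_bracket_left]
  and bracket_add_right = additive.add[OF additive_bracket_right]
  and bracket_zero_left [simp] = additive.zero[OF additive_bracket_left]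
  and bracket_zero_right [simp] = additive.zero[OF additive_bracket_right]
  and bracket_minus_right [simp] = additive.minus[OF additive_bracket_right]

lemma anticommute: "br y x = - br x y"
proof -
  have "br (x + y) (x + y) = br x x + br y x + (br x y + br y y)"
    by (simp only: bracket_add_left bracket_add_right)
  then have "br y x + br x y = 0" by (simp add: alternating)
  then show ?thesis by (rule add_eq_0_iff2[THEN iffD1])
qed

lemma self_mem_gen_L: "y \<in> gen_L sc br L y"
  unfolding mem_gen_L_iff using gen_alg.zero[of sc br L]
  by (intro exI[of _ 1] exI[of _ "\<lambda>u. 0"]) simp

lemma bracket_mem_gen_L:
  assumes v: "v \<in> L" and u: "u \<in> gen_L sc br L y"
  shows "br v u \<in> gen_L sc br L y"
proof -
  obtain c \<xi> where \<xi>: "\<xi> \<in> gen_alg sc br L" and u_eq: "u = sc c y + \<xi> y"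
    using u unfolding mem_gen_L_iff by blast
  define \<xi>' where "\<xi>' = (\<lambda>t. sc c (br v t) + (br v \<circ> \<xi>) t)"
  have "\<xi>' \<in> gen_alg sc br L"
    unfolding \<xi>'_def by (intro gen_alg.add gen_alg.smult gen_alg.comp gen_alg.L v \<xi>)
  moreover have "br v u = sc 0 y + \<xi>' y"
    unfolding \<xi>'_def u_eq by (simp add: bracket_add_right bracket_scale_right)
  ultimately show ?thesis unfolding mem_gen_L_iff by blast
qed

end

lemma symmetric_leibniz_quotients_lie_algebra:
  assumes "symmetric_leibniz sc br" and "algebra_of_quotients sc br L"
  shows "lie_algebra sc br"
proof -
  have alternating: "br x x = 0" for x
  proof (rule ccontr)
    assume "br x x \<noteq> 0"
    then obtain y where "br y (br x x) \<noteq> 0 \<or> br (br x x) y \<noteq> 0"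
      using assms(2) unfolding algebra_of_quotients_def by blast
    then show False using symmetric_leibniz_square_annihilates[OF assms(1)] by simp
  qed
  then show ?thesis
    using assms(1) unfolding symmetric_leibniz_def
    by (intro lie_algebra.intro lie_algebra_axioms.intro) blast+
qed

locale lie_subalgebra = lie_algebra +
  fixes L
  assumes subalgebra: "subalgebra sc br L"
begin

lemma subspace_L: "subspace L"
  and bracket_closed: "x \<in> L \<Longrightarrow> y \<in> L \<Longrightarrow> br x y \<in> L"
  using subalgebra by (auto simp: subalgebra_def)

lemma ideal_of_self: "ideal_of sc br L L"
  unfolding ideal_of_def using subspace_L bracket_closed by auto

lemma ideal_ofD:
  assumes "ideal_of sc br L I"
  shows "I \<subseteq> L" and "subspace I"
    and "a \<in> I \<Longrightarrow> x \<in> L \<Longrightarrow> br a x \<in> I" and "a \<in> I \<Longrightarrow> x \<in> L \<Longrightarrow> br x a \<in> I"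
  using assms by (auto simp: ideal_of_def)

lemma ideal_ofI:
  assumes "I \<subseteq> L" and "subspace I" and "\<And>a x. a \<in> I \<Longrightarrow> x \<in> L \<Longrightarrow> br a x \<in> I"
  shows "ideal_of sc br L I"
  unfolding ideal_of_def
proof (intro conjI ballI)
  fix a x assume a: "a \<in> I" and x: "x \<in> L"
  show "br a x \<in> I" using assms(3)[OF a x] .
  show "br x a \<in> I" using subspace_neg[OF assms(2) assms(3)[OF a x]] anticommute[of x a] by simp
qed (fact assms)+

lemma ideal_of_Int: "ideal_of sc br L I \<Longrightarrow> ideal_of sc br L J \<Longrightarrow> ideal_of sc br L (I \<inter> J)"
  unfolding ideal_of_def using subspace_inter by auto

lemma annihilator_bracket_closed:
  assumes J: "ideal_of sc br L J" and x: "x \<in> L" and w: "\<forall>j\<in>J. br j w = 0"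
  shows "\<forall>j\<in>J. br j (br x w) = 0"
proof
  fix j assume j: "j \<in> J"
  have "br j (br x w) = br (br j x) w + br x (br j w)" by (rule leibniz)
  then show "br j (br x w) = 0" using w j ideal_ofD(3)[OF J j x] by simp
qed

definition colon_ideal where
  "colon_ideal K y = {a \<in> L. \<forall>u \<in> gen_L sc br L y. br a u \<in> K}"

lemma colon_subset_colon_ideal: "colon sc br L y \<subseteq> colon_ideal L y"
  unfolding colon_def colon_ideal_def by auto

lemma ideal_of_colon_ideal:
  assumes K: "ideal_of sc br L K"
  shows "ideal_of sc br L (colon_ideal K y)"
proof (rule ideal_ofI)
  show "colon_ideal K y \<subseteq> L" unfolding colon_ideal_def by auto
  have "subspace K" by (rule ideal_ofD(2)[OF K])
  then show "subspace (colon_ideal K y)"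
    using subspace_L unfolding subspace_def colon_ideal_def
    by (auto simp: bracket_add_left bracket_scale_left)
  fix a v assume a: "a \<in> colon_ideal K y" and v: "v \<in> L"
  have aL: "a \<in> L" and au: "\<And>u. u \<in> gen_L sc br L y \<Longrightarrow> br a u \<in> K"
    using a unfolding colon_ideal_def by auto
  have "br (br a v) u \<in> K" if u: "u \<in> gen_L sc br L y" for u
  proof -
    have "br (br a v) u = br a (br v u) - br v (br a u)"
      using leibniz[of a v u] by (simp add: algebra_simps)
    moreover have "br a (br v u) \<in> K" using au bracket_mem_gen_L[OF v u] by auto
    moreover have "br v (br a u) \<in> K" using ideal_ofD(4)[OF K au[OF u] v] .
    ultimately show ?thesis using subspace_diff[OF ideal_ofD(2)[OF K]] by simp
  qed
  then show "br a v \<in> colon_ideal K y"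
    unfolding colon_ideal_def using bracket_closed aL v by auto
qed

end

locale semiprime_lie_subalgebra = lie_subalgebra +
  assumes semiprime: "semiprime sc br L"
begin

lemma ideal_annihilated_eq_0:
  assumes I: "ideal_of sc br L I" and w: "w \<in> I" and w_ann: "\<forall>a\<in>I. br a w = 0"
  shows "w = 0"
proof -
  define A where "A = {b \<in> I. \<forall>a\<in>I. br a b = 0}"
  have "ideal_of sc br L A"
  proof (rule ideal_ofI)
    show "A \<subseteq> L" using ideal_ofD(1)[OF I] A_def by auto
    show "subspace A"
      using ideal_ofD(2)[OF I] unfolding subspace_def A_def
      by (auto simp: bracket_add_right bracket_scale_right)
    fix b x assume b: "b \<in> A" and x: "x \<in> L"
    then have "b \<in> I" and "\<forall>a\<in>I. br a (br x b) = 0"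
      using annihilator_bracket_closed[OF I x] by (auto simp: A_def)
    then show "br b x \<in> A"
      using ideal_ofD(3)[OF I _ x] anticommute[of x b] by (simp add: A_def)
  qed
  moreover have "\<forall>a\<in>A. \<forall>b\<in>A. br a b = 0" using A_def by auto
  ultimately have "A = {0} \<or> A = {}" using semiprime unfolding semiprime_def by blast
  moreover have "w \<in> A" using w w_ann A_def by auto
  ultimately show ?thesis by auto
qed

definition dense_ideal where
  "dense_ideal K \<longleftrightarrow> ideal_of sc br L K \<and> (\<forall>w\<in>L. w \<noteq> 0 \<longrightarrow> (\<exists>a\<in>K. br a w \<noteq> 0))"

lemma dense_ideal_ideal_of: "dense_ideal K \<Longrightarrow> ideal_of sc br L K"
  unfolding dense_ideal_def by simp

lemma dense_ideal_L: "dense_ideal L"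
  unfolding dense_ideal_def using ideal_of_self ideal_annihilated_eq_0[OF ideal_of_self] by blast

lemma dense_ideal_if_brackets_subset:
  assumes M: "dense_ideal M" and M': "dense_ideal M'" and J: "ideal_of sc br L J"
    and brackets: "\<And>m m'. m \<in> M \<Longrightarrow> m' \<in> M' \<Longrightarrow> br m m' \<in> J"
  shows "dense_ideal J"
  unfolding dense_ideal_def
proof (intro conjI J ballI impI)
  fix w assume w: "w \<in> L" and "w \<noteq> 0"
  show "\<exists>a\<in>J. br a w \<noteq> 0"
  proof (rule ccontr)
    assume "\<not> (\<exists>a\<in>J. br a w \<noteq> 0)"
    then have w_ann: "\<forall>j\<in>J. br j w = 0" by auto
    have "br m w = 0" if m: "m \<in> M" for m
    proof -
      have mL: "m \<in> L" using m ideal_ofD(1)[OF dense_ideal_ideal_of[OF M]] by auto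
      define b where "b = br m w"
      have bM: "b \<in> M" unfolding b_def by (rule ideal_ofD(3)[OF dense_ideal_ideal_of[OF M] m w])
      have b_ann: "\<forall>j\<in>J. br j b = 0"
        unfolding b_def by (rule annihilator_bracket_closed[OF J mL w_ann])
      have "br m' b = 0" if m': "m' \<in> M'" for m'
      proof (rule ideal_annihilated_eq_0[OF J])
        have "m' \<in> L" using m' ideal_ofD(1)[OF dense_ideal_ideal_of[OF M']] by auto
        then show "\<forall>j\<in>J. br j (br m' b) = 0" by (rule annihilator_bracket_closed[OF J _ b_ann])
        show "br m' b \<in> J"
          using subspace_neg[OF ideal_ofD(2)[OF J] brackets[OF bM m']] anticommute[of m' b] by simp
      qed
      moreover have "b \<in> L" using bM ideal_ofD(1)[OF dense_ideal_ideal_of[OF M]] by auto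
      ultimately show ?thesis using M' unfolding dense_ideal_def b_def by blast
    qed
    then show False using M w \<open>w \<noteq> 0\<close> unfolding dense_ideal_def by blast
  qed
qed

lemma dense_ideal_Int:
  assumes "dense_ideal I" and "dense_ideal J"
  shows "dense_ideal (I \<inter> J)"
proof (rule dense_ideal_if_brackets_subset[OF assms])
  show "ideal_of sc br L (I \<inter> J)" using assms by (intro ideal_of_Int dense_ideal_ideal_of)
  fix a b assume "a \<in> I" and "b \<in> J"
  then show "br a b \<in> I \<inter> J"
    using assms ideal_ofD(1,3,4)[OF dense_ideal_ideal_of] by blast
qed

end

locale lie_algebra_of_quotients = semiprime_lie_subalgebra +
  assumes quotients: "algebra_of_quotients sc br L"
begin

lemma colon_bracket_nonzero:
  assumes "p \<noteq> 0"
  obtains x where "x \<in> colon sc br L q" and "br x p \<noteq> 0"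
proof -
  obtain x where "x \<in> colon sc br L q" and "br x p \<noteq> 0 \<or> br p x \<noteq> 0"
    using quotients assms unfolding algebra_of_quotients_def by blast
  then show thesis using that anticommute[of x p] by auto
qed

lemma dense_ideal_colon_L: "dense_ideal (colon_ideal L y)"
  unfolding dense_ideal_def
proof (intro conjI ideal_of_colon_ideal ideal_of_self ballI impI)
  fix w assume "w \<in> L" and "w \<noteq> 0"
  then obtain x where "x \<in> colon sc br L y" and "br x w \<noteq> 0"
    using colon_bracket_nonzero by blast
  then show "\<exists>a\<in>colon_ideal L y. br a w \<noteq> 0" using colon_subset_colon_ideal by blast
qed

lemma dense_ideal_colon_ideal:
  assumes K: "dense_ideal K"
  shows "dense_ideal (colon_ideal K y)"
proof -
  have KI: "ideal_of sc br L K" by (rule dense_ideal_ideal_of[OF K])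
  let ?M = "K \<inter> colon_ideal L y"
  have M: "dense_ideal ?M" by (rule dense_ideal_Int[OF K dense_ideal_colon_L])
  show ?thesis
  proof (rule dense_ideal_if_brackets_subset[OF M M ideal_of_colon_ideal[OF KI]])
    fix k c assume k: "k \<in> ?M" and c: "c \<in> ?M"
    have "br (br k c) u \<in> K" if u: "u \<in> gen_L sc br L y" for u
    proof -
      have "br (br k c) u = br k (br c u) - br c (br k u)"
        using leibniz[of k c u] by (simp add: algebra_simps)
      moreover have "br c u \<in> L" and "br k u \<in> L" using c k u colon_ideal_def by auto
      ultimately show ?thesis
        using k c ideal_ofD(3,4)[OF KI] subspace_diff[OF ideal_ofD(2)[OF KI]] by simp
    qed
    moreover have "br k c \<in> L" using k c bracket_closed ideal_ofD(1)[OF KI] by auto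
    ultimately show "br k c \<in> colon_ideal K y" unfolding colon_ideal_def by auto
  qed
qed

lemma dense_ideal_bracket_nonzero:
  assumes J: "dense_ideal J" and "w \<noteq> 0"
  shows "\<exists>a\<in>J. br a w \<noteq> 0"
proof (rule ccontr)
  assume "\<not> (\<exists>a\<in>J. br a w \<noteq> 0)"
  then have w_ann: "\<forall>a\<in>J. br a w = 0" by auto
  obtain x where x: "x \<in> colon sc br L w" and xw: "br x w \<noteq> 0"
    using \<open>w \<noteq> 0\<close> by (rule colon_bracket_nonzero)
  have "x \<in> L" and "br x w \<in> L" using x self_mem_gen_L unfolding colon_def by auto
  moreover have "\<forall>a\<in>J. br a (br x w) = 0"
    using annihilator_bracket_closed[OF dense_ideal_ideal_of[OF J] \<open>x \<in> L\<close> w_ann] .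
  ultimately show False using J xw unfolding dense_ideal_def by blast
qed

definition dense_denominators where
  "dense_denominators \<mu> \<longleftrightarrow>
     (\<forall>K. dense_ideal K \<longrightarrow> (\<exists>J. dense_ideal J \<and> (\<forall>a\<in>J. \<forall>v\<in>L. br a (\<mu> v) \<in> K)))"

lemma dense_denominators_id: "dense_denominators (\<lambda>t. t)"
  unfolding dense_denominators_def using ideal_ofD(3)[OF dense_ideal_ideal_of] by blast

lemma dense_denominators_zero: "dense_denominators (\<lambda>t. 0)"
  unfolding dense_denominators_def
  using subspace_0[OF ideal_ofD(2)[OF dense_ideal_ideal_of]] by auto

lemma dense_denominators_add:
  assumes f: "dense_denominators f" and g: "dense_denominators g"
  shows "dense_denominators (\<lambda>t. f t + g t)"
  unfolding dense_denominators_def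
proof (intro allI impI)
  fix K assume K: "dense_ideal K"
  obtain J1 where J1: "dense_ideal J1" "\<forall>a\<in>J1. \<forall>v\<in>L. br a (f v) \<in> K"
    using f K dense_denominators_def by blast
  obtain J2 where J2: "dense_ideal J2" "\<forall>a\<in>J2. \<forall>v\<in>L. br a (g v) \<in> K"
    using g K dense_denominators_def by blast
  have "\<forall>a\<in>J1 \<inter> J2. \<forall>v\<in>L. br a (f v + g v) \<in> K"
    using J1 J2 subspace_add[OF ideal_ofD(2)[OF dense_ideal_ideal_of[OF K]]]
    by (simp add: bracket_add_right)
  then show "\<exists>J. dense_ideal J \<and> (\<forall>a\<in>J. \<forall>v\<in>L. br a (f v + g v) \<in> K)"
    using dense_ideal_Int[OF J1(1) J2(1)] by blast
qed

lemma dense_denominators_scale: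
  assumes f: "dense_denominators f"
  shows "dense_denominators (\<lambda>t. sc c (f t))"
  unfolding dense_denominators_def
proof (intro allI impI)
  fix K assume K: "dense_ideal K"
  then obtain J where "dense_ideal J" and "\<forall>a\<in>J. \<forall>v\<in>L. br a (f v) \<in> K"
    using f dense_denominators_def by blast
  then show "\<exists>J. dense_ideal J \<and> (\<forall>a\<in>J. \<forall>v\<in>L. br a (sc c (f v)) \<in> K)"
    using subspace_scale[OF ideal_ofD(2)[OF dense_ideal_ideal_of[OF K]]]
    by (auto simp: bracket_scale_right)
qed

lemma dense_denominators_bracket_left:
  assumes f: "dense_denominators f"
  shows "dense_denominators (\<lambda>t. br y (f t))"
  unfolding dense_denominators_def
proof (intro allI impI)
  fix K assume K: "dense_ideal K"
  have K_sub: "subspace K" by (rule ideal_ofD(2)[OF dense_ideal_ideal_of[OF K]])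
  obtain J1 where J1: "dense_ideal J1" "\<forall>a\<in>J1. \<forall>v\<in>L. br a (f v) \<in> colon_ideal K y"
    using f dense_ideal_colon_ideal[OF K] dense_denominators_def by blast
  obtain J2 where J2: "dense_ideal J2" "\<forall>a\<in>J2. \<forall>v\<in>L. br a (f v) \<in> K"
    using f K dense_denominators_def by blast
  have "br a (br y (f v)) \<in> K" if a: "a \<in> J1 \<inter> colon_ideal J2 y" and v: "v \<in> L" for a v
  proof -
    \<comment> \<open>[[a, y], f v] \<in> K as [a, y] \<in> J2, and [y, [a, f v]] \<in> K as [a, f v] \<in> (K : y)\<close>
    have "br a (br y (f v)) = br (br a y) (f v) + br y (br a (f v))" by (rule leibniz)
    moreover have "br (br a y) (f v) \<in> K"
      using a v J2(2) self_mem_gen_L unfolding colon_ideal_def by blast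
    moreover have "br (br a (f v)) y \<in> K"
      using a v J1(2) self_mem_gen_L unfolding colon_ideal_def by blast
    then have "br y (br a (f v)) \<in> K"
      using subspace_neg[OF K_sub] anticommute[of y "br a (f v)"] by fastforce
    ultimately show ?thesis using subspace_add[OF K_sub] by simp
  qed
  then show "\<exists>J. dense_ideal J \<and> (\<forall>a\<in>J. \<forall>v\<in>L. br a (br y (f v)) \<in> K)"
    using dense_ideal_Int[OF J1(1) dense_ideal_colon_ideal[OF J2(1)]] by blast
qed

lemma dense_denominators_bracket_right:
  assumes "dense_denominators f"
  shows "dense_denominators (\<lambda>t. br (f t) y)"
proof -
  have "dense_denominators (\<lambda>t. sc (- 1) (br y (f t)))"
    by (rule dense_denominators_scale[OF dense_denominators_bracket_left[OF assms]])
  moreover have "sc (- 1) (br y (f t)) = br (f t) y" for t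
    using anticommute[of y "f t"] by (simp add: scale_minus_left)
  ultimately show ?thesis by simp
qed

lemma dense_denominators_comp:
  "f \<in> AQ sc br \<Longrightarrow> dense_denominators g \<Longrightarrow> dense_denominators (f \<circ> g)"
proof (induction f arbitrary: g rule: gen_alg.induct)
  case (R x)
  then show ?case using dense_denominators_bracket_right by (simp add: comp_def)
next
  case (L y)
  then show ?case using dense_denominators_bracket_left by (simp add: comp_def)
next
  case zero
  then show ?case using dense_denominators_zero by (simp add: comp_def)
next
  case (add f h)
  then show ?case using dense_denominators_add[of "f \<circ> g" "h \<circ> g"] by (simp add: comp_def)
next
  case (smult f c)
  then show ?case using dense_denominators_scale[of "f \<circ> g" c] by (simp add: comp_def)
next
  case (comp f h)
  then show ?case by (simp add: comp_assoc)
qed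

lemma dense_denominators_AQ: "f \<in> AQ sc br \<Longrightarrow> dense_denominators f"
  using dense_denominators_comp[of f "\<lambda>t. t"] dense_denominators_id by (simp add: comp_def)

theorem left_quotient_algebra_AQ_A0: "left_quotient_algebra (AQ sc br) (A0 sc br L)"
  unfolding left_quotient_algebra_def
proof (intro ballI impI)
  fix p q assume p: "p \<in> AQ sc br" and q: "q \<in> AQ sc br" and "p \<noteq> (\<lambda>u. 0)"
  then obtain u where pu: "p u \<noteq> 0" by auto
  obtain J where J: "dense_ideal J" and JqL: "\<forall>a\<in>J. \<forall>v\<in>L. br a (q v) \<in> L"
    using dense_denominators_AQ[OF q] dense_ideal_L dense_denominators_def by blast
  obtain a where a: "a \<in> J" and apu: "br a (p u) \<noteq> 0"
    using dense_ideal_bracket_nonzero[OF J pu] by blast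
  have aL: "a \<in> L" using a ideal_ofD(1)[OF dense_ideal_ideal_of[OF J]] by auto
  have La: "br a \<in> AQ sc br" using gen_alg.L[of a UNIV] by simp
  have "br a \<in> A0 sc br L" unfolding A0_def using La aL bracket_closed by auto
  moreover have "br a \<circ> p \<noteq> (\<lambda>u. 0)" using apu by (metis comp_apply)
  moreover have "br a \<circ> q \<in> A0 sc br L"
    unfolding A0_def using gen_alg.comp[OF La q] JqL a by auto
  ultimately show "\<exists>x\<in>A0 sc br L. x \<circ> p \<noteq> (\<lambda>u. 0) \<and> x \<circ> q \<in> A0 sc br L" by blast
qed

end

theorem theorem5p11:
  fixes sc :: "'f::field \<Rightarrow> 'q::ab_group_add \<Rightarrow> 'q"
    and br :: "'q \<Rightarrow> 'q \<Rightarrow> 'q"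
    and L :: "'q set"
  assumes "symmetric_leibniz sc br"
    and "subalgebra sc br L"
    and "semiprime sc br L"
    and "algebra_of_quotients sc br L"
  shows "left_quotient_algebra (AQ sc br) (A0 sc br L)"
proof -
  have "lie_algebra sc br"
    using assms(1,4) by (rule symmetric_leibniz_quotients_lie_algebra)
  then interpret lie_algebra_of_quotients sc br L
    using assms(2-4)
    by (intro lie_algebra_of_quotients.intro lie_algebra_of_quotients_axioms.intro
        semiprime_lie_subalgebra.intro semiprime_lie_subalgebra_axioms.intro
        lie_subalgebra.intro lie_subalgebra_axioms.intro)
  show ?thesis by (rule left_quotient_algebra_AQ_A0)
qed

end
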